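(* Let $(X,d)$ be a sequentially right $K$-complete quasi-metric space and $\varphi:X\to\mathbb{R}\cup\{\infty\}$ a proper, bounded below, nearly lower semicontinuous function. Suppose that for every $x\in X$ with $\varphi(x)>\inf\varphi(X)$ there exists $y\in X\setminus\overline{\{x\}}$ such that $\varphi(y)+d(y,x)\le\varphi(x)$. Then there exists $z\in X$ with $\varphi(z)=\inf\varphi(X)$.
   Context: A quasi-metric on $X$ is $d:X\times X\to[0,\infty)$ with $d(x,x)=0$, $d(x,z)\le d(x,y)+d(y,z)$, and $d(x,y)=d(y,x)=0\Rightarrow x=y$ (no symmetry). Topology $\tau_d$: neighbourhood base at $x$ given by $\{y:d(x,y)<r\}$, $r>0$; $x_n\to x$ iff $d(x,x_n)\to0$; $\overline{\{x\}}=\{y:d(y,x)=0\}$. A sequence $(x_n)$ is right $K$-Cauchy if for every $\varepsilon>0$ there is $n_\varepsilon$ with $d(x_{n+k},x_n)<\varepsilon$ for all $n\ge n_\varepsilon$, $k\in\mathbb{N}$; $X$ is sequentially right $K$-complete if every right $K$-Cauchy sequence converges. $\varphi$ is proper if finite somewhere; nearly lower semicontinuous if $\varphi(x)\le\liminf_n\varphi(x_n)$ for every sequence with pairwise distinct terms converging to $x$. *)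

theory Defs
  imports "HOL-Analysis.Analysis"
begin

definition quasi_metric :: "'a set \<Rightarrow> ('a \<Rightarrow> 'a \<Rightarrow> real) \<Rightarrow> bool" where
  "quasi_metric X d \<longleftrightarrow>
     (\<forall>x\<in>X. \<forall>y\<in>X. d x y \<ge> 0) \<and>
     (\<forall>x\<in>X. d x x = 0) \<and>
     (\<forall>x\<in>X. \<forall>y\<in>X. \<forall>z\<in>X. d x z \<le> d x y + d y z) \<and>
     (\<forall>x\<in>X. \<forall>y\<in>X. d x y = 0 \<and> d y x = 0 \<longrightarrow> x = y)"

definition qm_open :: "'a set \<Rightarrow> ('a \<Rightarrow> 'a \<Rightarrow> real) \<Rightarrow> 'a set \<Rightarrow> bool" where
  "qm_open X d U \<longleftrightarrow> U \<subseteq> X \<and> (\<forall>x\<in>U. \<exists>r>0. \<forall>y\<in>X. d x y < r \<longrightarrow> y \<in> U)"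

lemma istopology_qm_open: "istopology (qm_open X d)"
proof -
  have I: "qm_open X d (S \<inter> T)" if A: "qm_open X d S" and B: "qm_open X d T" for S T
    unfolding qm_open_def
  proof
    show "S \<inter> T \<subseteq> X" using A unfolding qm_open_def by blast
    show "\<forall>x\<in>S \<inter> T. \<exists>r>0. \<forall>y\<in>X. d x y < r \<longrightarrow> y \<in> S \<inter> T"
    proof
      fix x assume "x \<in> S \<inter> T"
      then obtain r1 r2 where "r1 > 0" "\<forall>y\<in>X. d x y < r1 \<longrightarrow> y \<in> S"
        "r2 > 0" "\<forall>y\<in>X. d x y < r2 \<longrightarrow> y \<in> T" using A B unfolding qm_open_def by blast
      then show "\<exists>r>0. \<forall>y\<in>X. d x y < r \<longrightarrow> y \<in> S \<inter> T"
        by (intro exI[of _ "min r1 r2"]) simp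
    qed
  qed
  have U: "qm_open X d (\<Union>K)" if "\<forall>S\<in>K. qm_open X d S" for K
    using that unfolding qm_open_def by (meson UnionE UnionI Union_least)
  show ?thesis unfolding istopology_def using I U by blast
qed

definition qm_topology :: "'a set \<Rightarrow> ('a \<Rightarrow> 'a \<Rightarrow> real) \<Rightarrow> 'a topology" where
  "qm_topology X d = topology (qm_open X d)"

definition qm_converges :: "('a \<Rightarrow> 'a \<Rightarrow> real) \<Rightarrow> (nat \<Rightarrow> 'a) \<Rightarrow> 'a \<Rightarrow> bool" where
  "qm_converges d s x \<longleftrightarrow> (\<lambda>n. d x (s n)) \<longlonglongrightarrow> 0"

definition right_K_Cauchy :: "('a \<Rightarrow> 'a \<Rightarrow> real) \<Rightarrow> (nat \<Rightarrow> 'a) \<Rightarrow> bool" where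
  "right_K_Cauchy d s \<longleftrightarrow>
     (\<forall>\<epsilon>>0. \<exists>N. \<forall>n\<ge>N. \<forall>k. d (s (n + k)) (s n) < \<epsilon>)"

definition seq_right_K_complete :: "'a set \<Rightarrow> ('a \<Rightarrow> 'a \<Rightarrow> real) \<Rightarrow> bool" where
  "seq_right_K_complete X d \<longleftrightarrow>
     (\<forall>s. range s \<subseteq> X \<and> right_K_Cauchy d s \<longrightarrow> (\<exists>x\<in>X. qm_converges d s x))"

definition nearly_lsc :: "'a set \<Rightarrow> ('a \<Rightarrow> 'a \<Rightarrow> real) \<Rightarrow> ('a \<Rightarrow> ereal) \<Rightarrow> bool" where
  "nearly_lsc X d \<phi> \<longleftrightarrow>
     (\<forall>s x. range s \<subseteq> X \<and> inj s \<and> x \<in> X \<and> qm_converges d s x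
        \<longrightarrow> \<phi> x \<le> liminf (\<lambda>n. \<phi> (s n)))"

end

theory Submission
  imports Defs
begin

text \<open>
  Suppose no minimiser exists. Restricted to the points where \<open>\<phi>\<close> is finite, the hypothesis says
  that every point can be improved by some \<open>y\<close> with \<open>d(y,x) > 0\<close>. Choosing at each stage an
  improvement whose value is within \<open>1/(n+1)\<close> of the infimum over all admissible improvements
  yields a sequence along which \<open>\<phi>\<close> strictly decreases and \<open>d(x\<^sub>n\<^sub>+\<^sub>k, x\<^sub>n)\<close> is bounded by the
  drop of \<open>\<phi>\<close>, so the sequence is right K-Cauchy and injective. Its limit \<open>z\<close> improves every
  term of the sequence, hence so does any improvement \<open>w\<close> of \<open>z\<close>; the near-optimality of the
  choices then forces \<open>\<phi>(w) \<ge> lim \<phi>(x\<^sub>n) \<ge> \<phi>(z)\<close>, contradicting \<open>\<phi>(w) < \<phi>(z)\<close>.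
\<close>

lemma quasi_metric_nonneg: "quasi_metric X d \<Longrightarrow> x \<in> X \<Longrightarrow> y \<in> X \<Longrightarrow> 0 \<le> d x y"
  unfolding quasi_metric_def by blast

lemma quasi_metric_refl: "quasi_metric X d \<Longrightarrow> x \<in> X \<Longrightarrow> d x x = 0"
  unfolding quasi_metric_def by blast

lemma quasi_metric_triangle:
  "quasi_metric X d \<Longrightarrow> x \<in> X \<Longrightarrow> y \<in> X \<Longrightarrow> z \<in> X \<Longrightarrow> d x z \<le> d x y + d y z"
  unfolding quasi_metric_def by blast

lemma openin_qm_topology: "openin (qm_topology X d) = qm_open X d"
  unfolding qm_topology_def by (rule topology_inverse'[OF istopology_qm_open])

lemma topspace_qm_topology: "topspace (qm_topology X d) = X"
proof -
  have "qm_open X d X"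
    unfolding qm_open_def by (auto intro: exI[of _ 1])
  then show ?thesis
    unfolding topspace_def openin_qm_topology qm_open_def by blast
qed

lemma in_qm_closure_of_singleton:
  assumes "x \<in> X" "y \<in> X" "d y x = 0"
  shows "y \<in> (qm_topology X d) closure_of {x}"
  unfolding in_closure_of topspace_qm_topology openin_qm_topology qm_open_def
  using assms by fastforce

definition d_point :: "'a set \<Rightarrow> ('a \<Rightarrow> 'a \<Rightarrow> real) \<Rightarrow> ('a \<Rightarrow> real) \<Rightarrow> 'a \<Rightarrow> bool" where
  "d_point Y d f x \<longleftrightarrow> x \<in> Y \<and> (\<forall>y\<in>Y. f y + d y x \<le> f x \<longrightarrow> d y x = 0)"

definition descent_seq :: "('a \<Rightarrow> 'a \<Rightarrow> real) \<Rightarrow> ('a \<Rightarrow> real) \<Rightarrow> (nat \<Rightarrow> 'a) \<Rightarrow> bool" where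
  "descent_seq d f s \<longleftrightarrow> (\<forall>n. f (s (Suc n)) + d (s (Suc n)) (s n) \<le> f (s n))"

lemma near_optimal_descent_step:
  fixes f :: "'a \<Rightarrow> real" and d :: "'a \<Rightarrow> 'a \<Rightarrow> real"
  assumes bdd: "bdd_below (f ` Y)" and x: "x \<in> Y"
    and improve: "\<exists>y\<in>Y. 0 < d y x \<and> f y + d y x \<le> f x" and e: "0 < e"
  shows "\<exists>y\<in>Y. f y + d y x \<le> f x \<and> f y < f x \<and>
           (\<forall>u\<in>Y. f u + d u x \<le> f x \<longrightarrow> f y < f u + e)"
proof -
  define D where "D = {u\<in>Y. f u + d u x \<le> f x}"
  obtain y0 where "y0 \<in> Y" "0 < d y0 x" "f y0 + d y0 x \<le> f x"
    using improve by blast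
  then have y0: "y0 \<in> D" "f y0 < f x"
    unfolding D_def by auto
  have bdd_D: "bdd_below (f ` D)"
    using bdd unfolding D_def by (rule bdd_below_mono) blast
  have "Inf (f ` D) \<le> f y0"
    using cInf_lower[OF _ bdd_D] y0 by blast
  then have "Inf (f ` D) < min (f x) (Inf (f ` D) + e)"
    using y0 e by simp
  then obtain y where "y \<in> D" "f y < min (f x) (Inf (f ` D) + e)"
    using cInf_lessD[of "f ` D"] y0 by blast
  moreover have "Inf (f ` D) \<le> f u" if "u \<in> D" for u
    using cInf_lower[OF _ bdd_D] that by blast
  ultimately show ?thesis
    unfolding D_def by fastforce
qed

lemma near_optimal_descent_sequence:
  assumes bdd: "bdd_below (f ` Y)" and x0: "x0 \<in> Y"
    and improve: "\<forall>x\<in>Y. \<exists>y\<in>Y. 0 < d y x \<and> f y + d y x \<le> f x"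
  obtains s where "range s \<subseteq> Y"
    and "descent_seq d f s"
    and "\<And>n. f (s (Suc n)) < f (s n)"
    and "\<And>n u. u \<in> Y \<Longrightarrow> f u + d u (s n) \<le> f (s n) \<Longrightarrow>
           f (s (Suc n)) < f u + inverse (real (Suc n))"
proof -
  have next_term: "\<exists>y\<in>Y. f y + d y x \<le> f x \<and> f y < f x \<and>
      (\<forall>u\<in>Y. f u + d u x \<le> f x \<longrightarrow> f y < f u + inverse (real (Suc n)))" if "x \<in> Y" for x n
    using near_optimal_descent_step[OF bdd that] improve that by simp
  have "\<exists>s. \<forall>n. s n \<in> Y \<and> (s (Suc n) \<in> Y \<and> f (s (Suc n)) + d (s (Suc n)) (s n) \<le> f (s n) \<and>
          f (s (Suc n)) < f (s n) \<and> (\<forall>u\<in>Y. f u + d u (s n) \<le> f (s n) \<longrightarrow>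
          f (s (Suc n)) < f u + inverse (real (Suc n))))"
    using x0 next_term by (intro dependent_nat_choice) blast+
  then show ?thesis
    using that unfolding descent_seq_def by blast
qed

lemma inj_if_values_strictly_decreasing:
  fixes f :: "'a \<Rightarrow> 'b::linordered_ab_group_add"
  assumes "\<And>n. f (s (Suc n)) < f (s n)"
  shows "inj s"
proof -
  have "inj ((\<lambda>x. - f x) \<circ> s)"
    using assms by (intro strict_mono_imp_inj_on) (simp add: strict_mono_Suc_iff)
  then show ?thesis
    by (rule inj_on_imageI2)
qed

lemma descent_dist_le:
  assumes qm: "quasi_metric X d" and s: "range s \<subseteq> X"
    and descent: "descent_seq d f s"
    and "m \<le> n"
  shows "d (s n) (s m) \<le> f (s m) - f (s n)"
  using \<open>m \<le> n\<close>
proof (induction n rule: dec_induct)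
  case base
  have "s m \<in> X"
    using s by blast
  then show ?case
    using quasi_metric_refl[OF qm] by simp
next
  case (step n)
  have "d (s (Suc n)) (s m) \<le> d (s (Suc n)) (s n) + d (s n) (s m)"
    using quasi_metric_triangle[OF qm] s by (simp add: image_subset_iff)
  then show ?case
    using step.IH descent[unfolded descent_seq_def, rule_format, of n] by linarith
qed

lemma right_K_Cauchy_descent:
  assumes qm: "quasi_metric X d" and s: "range s \<subseteq> X"
    and descent: "descent_seq d f s"
    and conv: "(\<lambda>n. f (s n)) \<longlonglongrightarrow> L"
  shows "right_K_Cauchy d s"
  unfolding right_K_Cauchy_def
proof (intro allI impI)
  fix e :: real
  assume "0 < e"
  then obtain N where N: "\<forall>m\<ge>N. \<forall>n\<ge>N. \<bar>f (s m) - f (s n)\<bar> < e"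
    using CauchyD[OF LIMSEQ_imp_Cauchy[OF conv]] by (metis real_norm_def)
  have "d (s (n + k)) (s n) < e" if "N \<le> n" for n k
  proof -
    have "d (s (n + k)) (s n) \<le> f (s n) - f (s (n + k))"
      using descent_dist_le[OF qm s descent, of n "n + k"] by simp
    also have "\<dots> < e"
      using N[rule_format, of n "n + k"] that by (simp add: abs_less_iff)
    finally show ?thesis .
  qed
  then show "\<exists>N. \<forall>n\<ge>N. \<forall>k. d (s (n + k)) (s n) < e"
    by blast
qed

lemma descent_limit_improves:
  assumes qm: "quasi_metric X d" and s: "range s \<subseteq> X" and z: "z \<in> X"
    and descent: "descent_seq d f s"
    and conv: "qm_converges d s z" and lim: "(\<lambda>n. f (s n)) \<longlonglongrightarrow> L" and fz: "f z \<le> L"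
  shows "f z + d z (s n) \<le> f (s n)"
proof -
  have "(\<lambda>k. d z (s k) + (f (s n) - f (s k))) \<longlonglongrightarrow> 0 + (f (s n) - L)"
    using conv unfolding qm_converges_def by (intro tendsto_intros lim)
  moreover have "d z (s n) \<le> d z (s k) + (f (s n) - f (s k))" if "n \<le> k" for k
    using quasi_metric_triangle[OF qm z, of "s k" "s n"] descent_dist_le[OF qm s descent that] s
    by force
  ultimately have "d z (s n) \<le> f (s n) - L"
    using LIMSEQ_le_const[of _ "0 + (f (s n) - L)"] by auto
  with fz show ?thesis
    by simp
qed

lemma exists_d_point:
  assumes qm: "quasi_metric X d" and complete: "seq_right_K_complete X d"
    and Y: "Y \<subseteq> X" "Y \<noteq> {}" and bdd: "bdd_below (f ` Y)"
    and lsc: "\<forall>s z L. range s \<subseteq> Y \<and> inj s \<and> z \<in> X \<and> qm_converges d s z \<and>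
                (\<lambda>n. f (s n)) \<longlonglongrightarrow> L \<longrightarrow> z \<in> Y \<and> f z \<le> L"
  shows "\<exists>x. d_point Y d f x"
proof (rule ccontr)
  assume "\<nexists>x. d_point Y d f x"
  then have improve: "\<forall>x\<in>Y. \<exists>y\<in>Y. 0 < d y x \<and> f y + d y x \<le> f x"
    unfolding d_point_def using quasi_metric_nonneg[OF qm] Y(1)
    by (metis less_eq_real_def subsetD)
  obtain s where sY: "range s \<subseteq> Y"
    and descent: "descent_seq d f s"
    and decrease: "\<And>n. f (s (Suc n)) < f (s n)"
    and near_opt: "\<And>n u. u \<in> Y \<Longrightarrow> f u + d u (s n) \<le> f (s n) \<Longrightarrow>
                     f (s (Suc n)) < f u + inverse (real (Suc n))"
    using near_optimal_descent_sequence[OF bdd _ improve] Y(2) by blast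
  have sX: "range s \<subseteq> X"
    using sY Y(1) by blast
  have "inj s"
    using decrease by (rule inj_if_values_strictly_decreasing)
  obtain c where "\<forall>y\<in>Y. c \<le> f y"
    using bdd unfolding bdd_below_def by blast
  then have "\<forall>n. c \<le> f (s n)"
    using sY by blast
  moreover have "decseq (\<lambda>n. f (s n))"
    using decrease by (intro decseq_SucI less_imp_le)
  ultimately obtain L where L: "(\<lambda>n. f (s n)) \<longlonglongrightarrow> L" "\<forall>n. L \<le> f (s n)"
    by (metis decseq_convergent)
  obtain z where z: "z \<in> X" "qm_converges d s z"
    using complete right_K_Cauchy_descent[OF qm sX descent L(1)] sX
    unfolding seq_right_K_complete_def by blast
  then have zY: "z \<in> Y" and fz: "f z \<le> L"
    using lsc[rule_format, of s z L] sY \<open>inj s\<close> L(1) by simp_all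
  obtain w where w: "w \<in> Y" "0 < d w z" "f w + d w z \<le> f z"
    using improve zY by blast
  have "f w + d w (s n) \<le> f (s n)" for n
    using quasi_metric_triangle[OF qm, of w z "s n"] w Y(1) z sX
      descent_limit_improves[OF qm sX z(1) descent z(2) L(1) fz, of n] by force
  then have "f (s (Suc n)) \<le> f w + inverse (real (Suc n))" for n
    using near_opt[OF w(1)] less_imp_le by blast
  then have "L \<le> f w"
    using LIMSEQ_le[OF LIMSEQ_Suc[OF L(1)] LIMSEQ_inverse_real_of_nat_add] by blast
  with w fz show False
    by simp
qed

lemma nearly_lsc_le_limit:
  assumes "nearly_lsc X d \<phi>" "range s \<subseteq> X" "inj s" "z \<in> X" "qm_converges d s z"
    and "(\<lambda>n. \<phi> (s n)) \<longlonglongrightarrow> L"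
  shows "\<phi> z \<le> L"
proof -
  have "liminf (\<lambda>n. \<phi> (s n)) = L"
    using lim_imp_Liminf[OF trivial_limit_sequentially assms(6)] .
  with assms(1-5) show ?thesis
    unfolding nearly_lsc_def by blast
qed

lemma nearly_lsc_finite_part:
  fixes \<phi> :: "'a \<Rightarrow> ereal"
  assumes nlsc: "nearly_lsc X d \<phi>" and no_minus_inf: "\<forall>x\<in>X. \<phi> x \<noteq> -\<infinity>"
  defines "Y \<equiv> {x\<in>X. \<phi> x \<noteq> \<infinity>}" and "f \<equiv> \<lambda>x. real_of_ereal (\<phi> x)"
  shows "\<forall>s z L. range s \<subseteq> Y \<and> inj s \<and> z \<in> X \<and> qm_converges d s z \<and>
           (\<lambda>n. f (s n)) \<longlonglongrightarrow> L \<longrightarrow> z \<in> Y \<and> f z \<le> L"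
proof (intro allI impI, elim conjE)
  fix s z L
  assume s: "range s \<subseteq> Y" and "inj s" "z \<in> X" "qm_converges d s z"
    and lim: "(\<lambda>n. f (s n)) \<longlonglongrightarrow> L"
  have "\<phi> (s n) = ereal (f (s n))" for n
    using s no_minus_inf unfolding Y_def f_def by (cases "\<phi> (s n)") auto
  then have "(\<lambda>n. \<phi> (s n)) \<longlonglongrightarrow> ereal L"
    using lim by simp
  moreover have "range s \<subseteq> X"
    using s unfolding Y_def by blast
  ultimately have "\<phi> z \<le> ereal L"
    using nearly_lsc_le_limit[OF nlsc _ \<open>inj s\<close> \<open>z \<in> X\<close> \<open>qm_converges d s z\<close>] by simp
  then show "z \<in> Y \<and> f z \<le> L"
    using \<open>z \<in> X\<close> no_minus_inf unfolding Y_def f_def by (cases "\<phi> z") auto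
qed

theorem corollary3p6:
  fixes X :: "'a set" and d :: "'a \<Rightarrow> 'a \<Rightarrow> real" and \<phi> :: "'a \<Rightarrow> ereal"
  assumes qm: "quasi_metric X d"
    and complete: "seq_right_K_complete X d"
    and no_minus_inf: "\<forall>x\<in>X. \<phi> x \<noteq> -\<infinity>"
    and proper: "\<exists>x\<in>X. \<phi> x \<noteq> \<infinity>"
    and bdd_below: "\<exists>c::real. \<forall>x\<in>X. ereal c \<le> \<phi> x"
    and nlsc: "nearly_lsc X d \<phi>"
    and step: "\<forall>x\<in>X. \<phi> x > (INF u\<in>X. \<phi> u) \<longrightarrow>
                 (\<exists>y\<in>(X - (qm_topology X d) closure_of {x}). \<phi> y + ereal (d y x) \<le> \<phi> x)"
  shows "\<exists>z\<in>X. \<phi> z = (INF u\<in>X. \<phi> u)"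
proof (rule ccontr)
  assume no_min: "\<not> ?thesis"
  define Y where "Y = {x\<in>X. \<phi> x \<noteq> \<infinity>}"
  define f where "f x = real_of_ereal (\<phi> x)" for x
  have Y_sub: "Y \<subseteq> X" and Y_ne: "Y \<noteq> {}"
    using proper unfolding Y_def by auto
  have \<phi>_eq: "\<phi> x = ereal (f x)" if "x \<in> Y" for x
    using that no_minus_inf unfolding Y_def f_def by (cases "\<phi> x") auto
  obtain c where c: "\<forall>x\<in>X. ereal c \<le> \<phi> x"
    using bdd_below by blast
  have bdd: "bdd_below (f ` Y)"
    by (rule bdd_belowI2[of _ c]) (use c \<phi>_eq Y_sub in force)
  obtain x where x: "d_point Y d f x"
    using exists_d_point[OF qm complete Y_sub Y_ne bdd]
      nearly_lsc_finite_part[OF nlsc no_minus_inf] unfolding Y_def f_def by blast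
  then have "x \<in> X" "(INF u\<in>X. \<phi> u) < \<phi> x"
    using no_min INF_lower[of x X \<phi>] unfolding d_point_def Y_def by (auto simp: order_less_le)
  then obtain y where y: "y \<in> X" "y \<notin> (qm_topology X d) closure_of {x}"
    and improves: "\<phi> y + ereal (d y x) \<le> \<phi> x"
    using step by blast
  have \<phi>x: "\<phi> x = ereal (f x)"
    using x \<phi>_eq unfolding d_point_def by blast
  then have "y \<in> Y"
    using improves y(1) unfolding Y_def by auto
  moreover have "f y + d y x \<le> f x"
    using improves \<phi>x \<phi>_eq[OF \<open>y \<in> Y\<close>] by simp
  ultimately have "d y x = 0"
    using x unfolding d_point_def by blast
  then show False
    using in_qm_closure_of_singleton[OF \<open>x \<in> X\<close> y(1)] y(2) by blast
qed

end
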